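(* Let $F:\mathbb Z^2\to\Lambda \mathrm{SU}_2$ be a discrete extended frame with data $u,p,q$ (as defined in the context). For every $(n,m)\in\mathbb Z^2$ decompose $F(n,m)$ by the two Birkhoff decompositions $$F=F_+F_-=G_-G_+,\qquad F_+\in\Lambda^+_*\mathrm{SU}_2,\ F_-\in\Lambda^-\mathrm{SU}_2,\ G_-\in\Lambda^-_*\mathrm{SU}_2,\ G_+\in\Lambda^+\mathrm{SU}_2 .$$ Then $F_+(n,m)$ does not depend on $m$ and $G_-(n,m)$ does not depend on $n$, and $$\xi_+:=F_+(n,m)^{-1}F_+(n+1,m)=\frac{1}{\Delta_+}\begin{pmatrix}1&\frac{i}{2}p\,e^{-i\alpha}\lambda\\ \frac{i}{2}p\,e^{i\alpha}\lambda&1\end{pmatrix},\qquad \xi_-:=G_-(n,m)^{-1}G_-(n,m+1)=\frac{1}{\Delta_-}\begin{pmatrix}1&-\frac{i}{2}q\,e^{i\beta}\lambda^{-1}\\ -\frac{i}{2}q\,e^{-i\beta}\lambda^{-1}&1\end{pmatrix},$$ where $p=p(n)$, $q=q(m)$, and $\alpha=\alpha(n)$, $\beta=\beta(m)$ are given by $$\alpha(n)=\tfrac12 u(n+1,0)+\tfrac12 u(n,0)-u(0,0),\qquad \beta(m)=\tfrac12 u(0,m+1)+\tfrac12 u(0,m).$$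
   Context: Pauli matrices: $\sigma_1=\begin{pmatrix}0&1\\1&0\end{pmatrix}$, $\sigma_2=\begin{pmatrix}0&-i\\i&0\end{pmatrix}$, $\sigma_3=\begin{pmatrix}1&0\\0&-1\end{pmatrix}$. Loop groups: $\Lambda\mathrm{SU}_2$ is the group of maps $g$ of the spectral parameter $\lambda$ (defined on $S^1\cup\mathbb R^\times$) into $\mathrm{SL}_2\mathbb C$ whose matrix entries lie in the Wiener algebra $\{\sum_{k\in\mathbb Z}f_k\lambda^k:\sum|f_k|<\infty\}$, satisfying the reality condition $g(\lambda)=\big(\overline{g(\bar\lambda)}^{\,t}\big)^{-1}$ and the twisting condition $\sigma_3g(\lambda)\sigma_3^{-1}=g(-\lambda)$. $\Lambda^+\mathrm{SU}_2$ (resp. $\Lambda^-\mathrm{SU}_2$) is the subgroup of loops extending holomorphically to the open unit disk (resp. to $\{|\lambda|>1\}\cup\{\infty\}$); $\Lambda^+_*\mathrm{SU}_2=\{g\in\Lambda^+\mathrm{SU}_2:g(0)=\mathrm{Id}\}$ and $\Lambda^-_*\mathrm{SU}_2=\{g\in\Lambda^-\mathrm{SU}_2:g(\infty)=\mathrm{Id}\}$. Birkhoff decomposition (known fact): the multiplication maps $\Lambda^+_*\mathrm{SU}_2\times\Lambda^-\mathrm{SU}_2\to\Lambda\mathrm{SU}_2$ and $\Lambda^-_*\mathrm{SU}_2\times\Lambda^+\mathrm{SU}_2\to\Lambda\mathrm{SU}_2$ are diffeomorphisms onto $\Lambda\mathrm{SU}_2$; so every loop factors uniquely in each of these two ways.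 Discrete setting: for a function $f$ on $\mathbb Z^2$ write $f_1=f(n+1,m)$, $f_2=f(n,m+1)$, $f_{12}=f(n+1,m+1)$. Let $p:\mathbb Z\to\mathbb R$ (a function of $n$) and $q:\mathbb Z\to\mathbb R$ (a function of $m$) satisfy $0<|p/2|<1$, $0<|q/2|<1$, and put $\Delta_+=\sqrt{1+(p/2)^2\lambda^2}$, $\Delta_-=\sqrt{1+(q/2)^2\lambda^{-2}}$ (branches positive for $\lambda>0$; $\Delta_+$ is holomorphic and nonvanishing on the closed unit disk, $\Delta_-$ on its closed exterior including $\infty$). For $u:\mathbb Z^2\to\mathbb R$ set $$U=\frac1{\Delta_+}\begin{pmatrix}e^{-\frac i2(u_1-u)}&\frac i2p\lambda\\ \frac i2p\lambda&e^{\frac i2(u_1-u)}\end{pmatrix},\qquad V=\frac1{\Delta_-}\begin{pmatrix}1&-\frac i2q\,e^{\frac i2(u_2+u)}\lambda^{-1}\\ -\frac i2q\,e^{-\frac i2(u_2+u)}\lambda^{-1}&1\end{pmatrix}.$$ A discrete extended frame with data $u,p,q$ is a map $F:\mathbb Z^2\to\Lambda\mathrm{SU}_2$ with $F(0,0)=\mathrm{Id}$, $F_1=FU$ and $F_2=FV$. (Its compatibility $VU_2=UV_1$ is the discrete sine-Gordon equation $\sin\frac{u_{12}-u_1-u_2+u}{4}=\frac{pq}{4}\sin\frac{u_{12}+u_1+u_2+u}{4}$.) The associated discrete pseudospherical surfaces are $f^\lambda=\lambda\,(\partial_\lambda F)F^{-1}$, $\lambda>0$. *)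

theory Defs
  imports "HOL-Analysis.Analysis"
begin

text \<open>Loops are maps from the unit circle into 2x2 complex matrices; a loop is
represented by a function on complex numbers of which only the values on the
unit circle are relevant.\<close>

type_synonym cmat = "complex ^ 2 ^ 2"
type_synonym loop = "complex \<Rightarrow> cmat"

definition S1 :: "complex set" where
  "S1 = {z. norm z = 1}"

definition mat2 :: "complex \<Rightarrow> complex \<Rightarrow> complex \<Rightarrow> complex \<Rightarrow> cmat" where
  "mat2 a b c d = (\<chi> i j. if i = 1 then (if j = 1 then a else b) else (if j = 1 then c else d))"

definition sigma3 :: cmat where
  "sigma3 = mat2 1 0 0 (-1)"

definition ctrans :: "cmat \<Rightarrow> cmat" where
  "ctrans A = (\<chi> i j. cnj (A $ j $ i))"

definition wiener_coeffs :: "loop \<Rightarrow> (int \<Rightarrow> cmat) \<Rightarrow> bool" where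
  "wiener_coeffs g c \<longleftrightarrow>
     (\<forall>i j. (\<lambda>k. norm (c k $ i $ j)) summable_on UNIV) \<and>
     (\<forall>z\<in>S1. \<forall>i j. ((\<lambda>k. c k $ i $ j * z powi k) has_sum (g z $ i $ j)) UNIV)"

definition LSU2 :: "loop \<Rightarrow> bool" where
  "LSU2 g \<longleftrightarrow> (\<exists>c. wiener_coeffs g c) \<and>
     (\<forall>z\<in>S1. det (g z) = 1) \<and>
     (\<forall>z\<in>S1. g z = matrix_inv (ctrans (g (cnj z)))) \<and>
     (\<forall>z\<in>S1. sigma3 ** g z ** matrix_inv sigma3 = g (- z))"

text \<open>Lambda^+ : only non-negative powers; Lambda^+_* : additionally g(0) = Id.\<close>
definition LSU2_plus :: "loop \<Rightarrow> bool" where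
  "LSU2_plus g \<longleftrightarrow> LSU2 g \<and> (\<exists>c. wiener_coeffs g c \<and> (\<forall>k<0. c k = 0))"

definition LSU2_plus_star :: "loop \<Rightarrow> bool" where
  "LSU2_plus_star g \<longleftrightarrow> LSU2 g \<and>
     (\<exists>c. wiener_coeffs g c \<and> (\<forall>k<0. c k = 0) \<and> c 0 = mat 1)"

text \<open>Lambda^- : only non-positive powers; Lambda^-_* : additionally g(infinity) = Id.\<close>
definition LSU2_minus :: "loop \<Rightarrow> bool" where
  "LSU2_minus g \<longleftrightarrow> LSU2 g \<and> (\<exists>c. wiener_coeffs g c \<and> (\<forall>k>0. c k = 0))"

definition LSU2_minus_star :: "loop \<Rightarrow> bool" where
  "LSU2_minus_star g \<longleftrightarrow> LSU2 g \<and>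
     (\<exists>c. wiener_coeffs g c \<and> (\<forall>k>0. c k = 0) \<and> c 0 = mat 1)"

text \<open>Delta_+ and Delta_- (principal square root = branch positive for real lambda > 0,
holomorphic on the relevant closed regions since |p/2|,|q/2| < 1).\<close>
definition Delta_plus :: "real \<Rightarrow> complex \<Rightarrow> complex" where
  "Delta_plus p z = csqrt (1 + (complex_of_real (p / 2))\<^sup>2 * z\<^sup>2)"

definition Delta_minus :: "real \<Rightarrow> complex \<Rightarrow> complex" where
  "Delta_minus q z = csqrt (1 + (complex_of_real (q / 2))\<^sup>2 * inverse (z\<^sup>2))"

definition Umat :: "(int \<Rightarrow> int \<Rightarrow> real) \<Rightarrow> (int \<Rightarrow> real) \<Rightarrow> int \<Rightarrow> int \<Rightarrow> loop" where
  "Umat u p n m z =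
     (let D = Delta_plus (p n) z;
          e = exp (- \<i> * complex_of_real ((u (n + 1) m - u n m) / 2));
          off = \<i> / 2 * complex_of_real (p n) * z
      in mat2 (e / D) (off / D) (off / D) (cnj e / D))"

definition Vmat :: "(int \<Rightarrow> int \<Rightarrow> real) \<Rightarrow> (int \<Rightarrow> real) \<Rightarrow> int \<Rightarrow> int \<Rightarrow> loop" where
  "Vmat u q n m z =
     (let D = Delta_minus (q m) z;
          e = exp (\<i> * complex_of_real ((u n (m + 1) + u n m) / 2));
          c = - \<i> / 2 * complex_of_real (q m) * inverse z
      in mat2 (1 / D) (c * e / D) (c * cnj e / D) (1 / D))"

definition discrete_extended_frame ::
  "(int \<Rightarrow> int \<Rightarrow> loop) \<Rightarrow> (int \<Rightarrow> int \<Rightarrow> real) \<Rightarrow> (int \<Rightarrow> real) \<Rightarrow> (int \<Rightarrow> real) \<Rightarrow> bool" where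
  "discrete_extended_frame F u p q \<longleftrightarrow>
     (\<forall>n m. LSU2 (F n m)) \<and>
     (\<forall>z\<in>S1. F 0 0 z = mat 1) \<and>
     (\<forall>n m. \<forall>z\<in>S1. F (n + 1) m z = F n m z ** Umat u p n m z) \<and>
     (\<forall>n m. \<forall>z\<in>S1. F n (m + 1) z = F n m z ** Vmat u q n m z)"

definition xi_plus :: "real \<Rightarrow> real \<Rightarrow> loop" where
  "xi_plus p \<alpha> z =
     (let D = Delta_plus p z in
      mat2 (1 / D) (\<i> / 2 * complex_of_real p * exp (- \<i> * complex_of_real \<alpha>) * z / D)
           (\<i> / 2 * complex_of_real p * exp (\<i> * complex_of_real \<alpha>) * z / D) (1 / D))"

definition xi_minus :: "real \<Rightarrow> real \<Rightarrow> loop" where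
  "xi_minus q \<beta> z =
     (let D = Delta_minus q z in
      mat2 (1 / D) (- \<i> / 2 * complex_of_real q * exp (\<i> * complex_of_real \<beta>) * inverse z / D)
           (- \<i> / 2 * complex_of_real q * exp (- \<i> * complex_of_real \<beta>) * inverse z / D) (1 / D))"

end

theory Submission
  imports Defs "HOL-Complex_Analysis.Cauchy_Integral_Formula"
begin

text \<open>A loop with Wiener coefficients only in non-negative (non-positive) degrees extends
holomorphically into the unit disc (its exterior), so a loop of both kinds is constant by
Cauchy's integral formula; this makes normalised Birkhoff factors unique.
Since \<open>V\<close> extends to the exterior, \<open>F\<^sub>+\<close> does not change from \<open>(n,m)\<close> to \<open>(n,m+1)\<close>;
dually, \<open>U\<close> extends into the disc and \<open>G\<^sub>-\<close> does not change from \<open>(n,m)\<close> to \<open>(n+1,m)\<close>.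
On the axis \<open>m = 0\<close> one has \<open>U = D \<xi>\<^sub>+ D'\<close> with constant diagonal \<open>D, D'\<close>, so \<open>F(n,0)\<close> times
a constant diagonal matrix is the normalised product \<open>\<xi>\<^sub>+(0)\<cdots>\<xi>\<^sub>+(n-1)\<close>, which therefore
is \<open>F\<^sub>+(n,0)\<close>; on the axis \<open>n = 0\<close> the frame \<open>F(0,m)\<close> is a normalised product of the
\<open>V = \<xi>\<^sub>-\<close> and hence equals \<open>G\<^sub>-(0,m)\<close>.\<close>

section \<open>2\<times>2 matrices\<close>

lemma mat2_nth [simp]:
  "mat2 a b c d $ 1 $ 1 = a" "mat2 a b c d $ 1 $ 2 = b"
  "mat2 a b c d $ 2 $ 1 = c" "mat2 a b c d $ 2 $ 2 = d"
  by (simp_all add: mat2_def)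

lemma mat2_eta: "M = mat2 (M$1$1) (M$1$2) (M$2$1) (M$2$2)"
  by (simp add: vec_eq_iff forall_2)

lemma mat2_eq_iff: "mat2 a b c d = mat2 a' b' c' d' \<longleftrightarrow> a = a' \<and> b = b' \<and> c = c' \<and> d = d'"
  by (auto simp: vec_eq_iff forall_2)

lemma mat2_mult:
  "mat2 a b c d ** mat2 a' b' c' d' =
   mat2 (a*a' + b*c') (a*b' + b*d') (c*a' + d*c') (c*b' + d*d')"
  by (simp add: vec_eq_iff forall_2 matrix_matrix_mult_def sum_2)

lemma mat_1_eq_mat2: "mat 1 = mat2 1 0 0 1"
  by (simp add: vec_eq_iff forall_2 mat_def)

lemma det_mat2: "det (mat2 a b c d) = a*d - b*c"
  by (simp add: det_2)

lemma matrix_mult_nth_2: "((A::cmat) ** B) $ i $ j = A$i$1 * B$1$j + A$i$2 * B$2$j"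
  by (simp add: matrix_matrix_mult_def sum_2)

definition adj2 :: "cmat \<Rightarrow> cmat" where
  "adj2 M = mat2 (M$2$2) (-M$1$2) (-M$2$1) (M$1$1)"

lemma adj2_mat_1 [simp]: "adj2 (mat 1) = mat 1"
  by (simp add: adj2_def mat_1_eq_mat2)

lemma matrix_mul_adj2: "det M = 1 \<Longrightarrow> M ** adj2 M = mat 1"
  by (subst mat2_eta[of M])
    (simp add: adj2_def mat2_mult mat_1_eq_mat2 det_2 mat2_eq_iff algebra_simps)

lemma adj2_matrix_mul: "det M = 1 \<Longrightarrow> adj2 M ** M = mat 1"
  by (subst (2) mat2_eta[of M])
    (simp add: adj2_def mat2_mult mat_1_eq_mat2 det_2 mat2_eq_iff algebra_simps)

lemma matrix_inv_eq_adj2: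
  assumes "det M = 1"
  shows "matrix_inv M = adj2 M"
proof -
  have inv: "M ** matrix_inv M = mat 1 \<and> matrix_inv M ** M = mat 1"
    unfolding matrix_inv_def
    by (rule someI[of _ "adj2 M"]) (simp add: matrix_mul_adj2 adj2_matrix_mul assms)
  have "matrix_inv M = matrix_inv M ** (M ** adj2 M)"
    by (simp add: matrix_mul_adj2 assms)
  also have "\<dots> = adj2 M"
    using inv by (simp add: matrix_mul_assoc)
  finally show ?thesis .
qed

lemma adj2_mult_swap:
  assumes "det P = 1" "det M' = 1" "P' ** M' = P ** X"
  shows "adj2 P ** P' = X ** adj2 M'"
proof -
  have "adj2 P ** P' = adj2 P ** P' ** (M' ** adj2 M')"
    by (simp add: matrix_mul_adj2 assms(2))
  also have "\<dots> = adj2 P ** (P ** X) ** adj2 M'"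
    by (simp add: matrix_mul_assoc flip: assms(3))
  finally show ?thesis
    by (simp add: matrix_mul_assoc adj2_matrix_mul assms(1))
qed

lemma adj2_mult_eq_mat_1_imp_eq:
  assumes "det P = 1" "adj2 P ** P' = mat 1"
  shows "P' = P"
proof -
  have "P' = (P ** adj2 P) ** P'"
    by (simp add: matrix_mul_adj2 assms(1))
  also have "\<dots> = P"
    by (simp flip: matrix_mul_assoc add: assms(2))
  finally show ?thesis .
qed

definition diag_phase :: "real \<Rightarrow> cmat" where
  "diag_phase x = mat2 (exp (- \<i> * complex_of_real (x / 2))) 0 0 (exp (\<i> * complex_of_real (x / 2)))"

lemma diag_phase_add: "diag_phase x ** diag_phase y = diag_phase (x + y)"
  by (simp add: diag_phase_def mat2_mult mat2_eq_iff exp_add[symmetric] algebra_simps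
      add_divide_distrib)

lemma diag_phase_0 [simp]: "diag_phase 0 = mat 1"
  by (simp add: diag_phase_def mat_1_eq_mat2)

lemma det_diag_phase: "det (diag_phase x) = 1"
  by (simp add: diag_phase_def det_mat2 exp_add[symmetric])

section \<open>Holomorphic extension of loops\<close>

definition holo_disc :: "(complex \<Rightarrow> complex) \<Rightarrow> bool" where
  "holo_disc f \<longleftrightarrow> f holomorphic_on ball 0 1 \<and> continuous_on (cball 0 1) f"

lemma holo_disc_const: "holo_disc (\<lambda>z. c)"
  by (simp add: holo_disc_def)

lemma holo_disc_id: "holo_disc (\<lambda>z. z)"
  by (simp add: holo_disc_def)

lemma holo_disc_add: "holo_disc f \<Longrightarrow> holo_disc g \<Longrightarrow> holo_disc (\<lambda>z. f z + g z)"
  unfolding holo_disc_def by (auto intro!: holomorphic_intros continuous_intros)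

lemma holo_disc_mult: "holo_disc f \<Longrightarrow> holo_disc g \<Longrightarrow> holo_disc (\<lambda>z. f z * g z)"
  unfolding holo_disc_def by (auto intro!: holomorphic_intros continuous_intros)

lemma holo_disc_uminus: "holo_disc f \<Longrightarrow> holo_disc (\<lambda>z. - f z)"
  unfolding holo_disc_def by (auto intro!: holomorphic_intros continuous_intros)

lemma holo_disc_divide:
  "holo_disc f \<Longrightarrow> holo_disc g \<Longrightarrow> (\<And>z. norm z \<le> 1 \<Longrightarrow> g z \<noteq> 0) \<Longrightarrow>
   holo_disc (\<lambda>z. f z / g z)"
  unfolding holo_disc_def by (auto intro!: holomorphic_intros continuous_intros)

text \<open>Cauchy's formula for \<open>f\<close> at \<open>w\<close> turns, after the substitution \<open>u \<mapsto> 1/u\<close> on the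
circle, into Cauchy's formula for \<open>h(u)/(1 - w u)\<close> at \<open>0\<close>.\<close>

lemma holo_disc_inverse_glue_ball:
  assumes f: "holo_disc f" and h: "holo_disc h"
    and eq: "\<And>z. z \<in> S1 \<Longrightarrow> f z = h (inverse z)" and w: "norm w < 1"
  shows "f w = h 0"
proof -
  define G where "G u = h u / (1 - w * u)" for u
  have nz: "1 - w * u \<noteq> 0" if "norm u \<le> 1" for u
  proof
    assume "1 - w * u = 0"
    then have "norm w * norm u = 1" by (metis norm_mult norm_one right_minus_eq)
    moreover have "norm w * norm u \<le> norm w"
      using that by (simp add: mult_left_le)
    ultimately show False
      using w by simp
  qed
  have "((\<lambda>u. f u / (u - w)) has_contour_integral (2 * of_real pi * \<i> * f w)) (circlepath 0 1)"
    using f w unfolding holo_disc_def by (intro Cauchy_integral_circlepath) auto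
  then have I_f: "((\<lambda>t. f (cis t) / (cis t - w) * \<i> * cis t) has_integral
      (2 * of_real pi * \<i> * f w)) {0..2*pi}"
    unfolding circlepath_def by (subst (asm) has_contour_integral_part_circlepath_iff) auto
  have "G holomorphic_on ball 0 1" "continuous_on (cball 0 1) G"
    unfolding G_def using h nz unfolding holo_disc_def
    by (auto intro!: holomorphic_intros continuous_intros)
  then have "((\<lambda>u. G u / (u - 0)) has_contour_integral (2 * of_real pi * \<i> * G 0)) (circlepath 0 1)"
    by (intro Cauchy_integral_circlepath) auto
  then have "((\<lambda>t. G (cis t) * \<i>) has_integral (2 * of_real pi * \<i> * G 0)) {0..2*pi}"
    unfolding circlepath_def by (subst (asm) has_contour_integral_part_circlepath_iff) auto
  then have "((\<lambda>t. G (cis (- t)) * \<i>) has_integral (2 * of_real pi * \<i> * G 0)) {-(2*pi)..-0}"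
    by (rule has_integral_reflect_real[THEN iffD2])
  then have "((\<lambda>t. G (cis (- (t + - (2*pi)))) * \<i>) has_integral (2 * of_real pi * \<i> * G 0))
      {-(2*pi) - -(2*pi)..-0 - -(2*pi)}"
    by (rule has_integral_shift_real_ivl)
  moreover have "cis (- (t + - (2*pi))) = inverse (cis t)" for t
    by (simp add: cis_divide[symmetric] inverse_eq_divide)
  ultimately have I_G: "((\<lambda>t. G (inverse (cis t)) * \<i>) has_integral (2 * of_real pi * \<i> * G 0))
      {0..2*pi}"
    by simp
  have "G (inverse (cis t)) * \<i> = f (cis t) / (cis t - w) * \<i> * cis t" for t
  proof -
    have "cis t \<noteq> 0" "cis t \<noteq> w"
      using w by auto
    then have "1 - w * inverse (cis t) = (cis t - w) / cis t"
      by (simp add: field_simps)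
    moreover have "h (inverse (cis t)) = f (cis t)"
      by (simp add: eq S1_def)
    ultimately show ?thesis
      by (simp add: G_def)
  qed
  then have "(\<lambda>t. G (inverse (cis t)) * \<i>) = (\<lambda>t. f (cis t) / (cis t - w) * \<i> * cis t)"
    by (rule ext)
  then have "2 * of_real pi * \<i> * G 0 = 2 * of_real pi * \<i> * f w"
    using has_integral_unique I_G I_f by metis
  then show ?thesis by (simp add: G_def)
qed

lemma holo_disc_inverse_glue:
  assumes f: "holo_disc f" and h: "holo_disc h"
    and eq: "\<And>z. z \<in> S1 \<Longrightarrow> f z = h (inverse z)" and w: "norm w \<le> 1"
  shows "f w = h 0"
proof (rule continuous_constant_on_closure[of "ball 0 1" f "h 0" w])
  show "continuous_on (closure (ball 0 1)) f"
    using f by (simp add: holo_disc_def)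
  show "w \<in> closure (ball 0 1)"
    using w by simp
qed (simp add: holo_disc_inverse_glue_ball[OF f h eq])

lemma wiener_series_extends_into_disc:
  fixes c :: "int \<Rightarrow> complex" and v :: "complex \<Rightarrow> complex"
  assumes sm: "(\<lambda>k. norm (c k)) summable_on UNIV" and neg: "\<And>k. k < 0 \<Longrightarrow> c k = 0"
    and hs: "\<And>z. z \<in> S1 \<Longrightarrow> ((\<lambda>k. c k * z powi k) has_sum v z) UNIV"
  obtains f where "holo_disc f" "f 0 = c 0" "\<And>z. z \<in> S1 \<Longrightarrow> v z = f z"
proof -
  define a where "a n = c (int n)" for n
  have "(\<lambda>k. norm (c k)) summable_on range int"
    using sm by (rule summable_on_subset) auto
  then have "summable (\<lambda>n. norm (a n))"
    unfolding a_def by (subst (asm) summable_on_reindex) (auto simp: o_def intro: summable_on_imp_summable)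
  define f where "f z = (\<Sum>n. a n * z ^ n)" for z
  have lim: "uniform_limit (cball 0 1) (\<lambda>N z. \<Sum>i<N. a i * z ^ i) f sequentially"
    unfolding f_def
  proof (rule Weierstrass_m_test[OF _ \<open>summable (\<lambda>n. norm (a n))\<close>])
    fix n and z :: complex
    assume "z \<in> cball 0 1"
    then have "norm (z ^ n) \<le> 1"
      by (simp add: norm_power power_le_one)
    then show "norm (a n * z ^ n) \<le> norm (a n)"
      by (simp add: norm_mult mult_left_le)
  qed
  obtain "continuous_on (cball 0 1) f" "f holomorphic_on ball 0 1"
    by (rule holomorphic_uniform_limit[OF _ lim])
      (auto intro!: always_eventually continuous_intros holomorphic_intros)
  then have "holo_disc f"
    by (simp add: holo_disc_def)
  moreover have "f 0 = c 0"
    unfolding f_def using powser_zero[of a] by (simp add: a_def)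
  moreover have "v z = f z" if z: "z \<in> S1" for z
  proof -
    have "((\<lambda>k. c k * z powi k) has_sum v z) (range int)"
      using hs[OF z]
      by (rule has_sum_cong_neutral[THEN iffD1, rotated -1])
        (auto simp: neg image_iff, metis neg nonneg_int_cases not_le)
    then have "(\<lambda>n. a n * z ^ n) sums v z"
      unfolding a_def
      by (subst (asm) has_sum_reindex) (auto simp: o_def intro: has_sum_imp_sums)
    then show ?thesis
      unfolding f_def by (simp add: sums_iff)
  qed
  ultimately show ?thesis
    using that by blast
qed

lemma wiener_series_extends_outside_disc:
  fixes c :: "int \<Rightarrow> complex" and v :: "complex \<Rightarrow> complex"
  assumes sm: "(\<lambda>k. norm (c k)) summable_on UNIV" and pos: "\<And>k. k > 0 \<Longrightarrow> c k = 0"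
    and hs: "\<And>z. z \<in> S1 \<Longrightarrow> ((\<lambda>k. c k * z powi k) has_sum v z) UNIV"
  obtains f where "holo_disc f" "f 0 = c 0" "\<And>z. z \<in> S1 \<Longrightarrow> v z = f (inverse z)"
proof -
  have inj: "inj_on uminus (UNIV::int set)" and surj: "uminus ` (UNIV::int set) = UNIV"
    by (simp_all add: surj_def)
  have sm': "(\<lambda>k. norm (c (- k))) summable_on UNIV"
    using sm summable_on_reindex[OF inj, of "\<lambda>k. norm (c k)"] by (simp add: surj o_def)
  have hs': "((\<lambda>k. c (- k) * w powi k) has_sum v (inverse w)) UNIV" if w: "w \<in> S1" for w
  proof -
    have "inverse w \<in> S1"
      using w by (simp add: S1_def norm_inverse)
    then have "(((\<lambda>k. c k * (inverse w) powi k) \<circ> uminus) has_sum v (inverse w)) UNIV"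
      using hs[OF \<open>inverse w \<in> S1\<close>] has_sum_reindex[OF inj, of "\<lambda>k. c k * (inverse w) powi k"] by (simp add: surj)
    then show ?thesis
      by (simp add: o_def power_int_minus power_int_inverse)
  qed
  obtain f where f: "holo_disc f" "f 0 = c (- 0)" "\<And>w. w \<in> S1 \<Longrightarrow> v (inverse w) = f w"
    by (rule wiener_series_extends_into_disc[OF sm' _ hs']) (auto simp: pos)
  have "v z = f (inverse z)" if "z \<in> S1" for z
    using f(3)[of "inverse z"] that by (simp add: S1_def norm_inverse)
  then show ?thesis
    using that[of f] f(1,2) by simp
qed

definition holo_disc_mat :: "loop \<Rightarrow> bool" where
  "holo_disc_mat M \<longleftrightarrow> (\<forall>i j. holo_disc (\<lambda>z. M z $ i $ j))"

text \<open>\<open>extends_outside A a\<close> says that \<open>A\<close> extends holomorphically to \<open>|\<lambda>| \<ge> 1\<close>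
including \<open>\<infinity>\<close>, with value \<open>a\<close> at \<open>\<infinity>\<close>.\<close>

definition extends_inside :: "loop \<Rightarrow> cmat \<Rightarrow> bool" where
  "extends_inside A a \<longleftrightarrow> (\<exists>B. holo_disc_mat B \<and> B 0 = a \<and> (\<forall>z\<in>S1. A z = B z))"

definition extends_outside :: "loop \<Rightarrow> cmat \<Rightarrow> bool" where
  "extends_outside A a \<longleftrightarrow> (\<exists>B. holo_disc_mat B \<and> B 0 = a \<and> (\<forall>z\<in>S1. A z = B (inverse z)))"

lemma wiener_coeffs_extends_inside:
  assumes w: "wiener_coeffs g c" and neg: "\<forall>k<0. c k = 0"
  shows "extends_inside g (c 0)"
proof -
  have "\<forall>i j. \<exists>f. holo_disc f \<and> f 0 = c 0 $ i $ j \<and> (\<forall>z\<in>S1. g z $ i $ j = f z)"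
  proof (intro allI)
    fix i j
    obtain f where "holo_disc f" "f 0 = c 0 $ i $ j" "\<And>z. z \<in> S1 \<Longrightarrow> g z $ i $ j = f z"
      by (rule wiener_series_extends_into_disc[of "\<lambda>k. c k $ i $ j" "\<lambda>z. g z $ i $ j"])
        (use w neg in \<open>auto simp: wiener_coeffs_def\<close>)
    then show "\<exists>f. holo_disc f \<and> f 0 = c 0 $ i $ j \<and> (\<forall>z\<in>S1. g z $ i $ j = f z)"
      by blast
  qed
  then obtain f where f: "\<And>i j. holo_disc (f i j) \<and> f i j 0 = c 0 $ i $ j \<and> (\<forall>z\<in>S1. g z $ i $ j = f i j z)"
    by metis
  show ?thesis
    unfolding extends_inside_def holo_disc_mat_def
    by (rule exI[of _ "\<lambda>z. \<chi> i j. f i j z"]) (simp add: f vec_eq_iff)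
qed

lemma wiener_coeffs_extends_outside:
  assumes w: "wiener_coeffs g c" and pos: "\<forall>k>0. c k = 0"
  shows "extends_outside g (c 0)"
proof -
  have "\<forall>i j. \<exists>f. holo_disc f \<and> f 0 = c 0 $ i $ j \<and> (\<forall>z\<in>S1. g z $ i $ j = f (inverse z))"
  proof (intro allI)
    fix i j
    obtain f where "holo_disc f" "f 0 = c 0 $ i $ j" "\<And>z. z \<in> S1 \<Longrightarrow> g z $ i $ j = f (inverse z)"
      by (rule wiener_series_extends_outside_disc[of "\<lambda>k. c k $ i $ j" "\<lambda>z. g z $ i $ j"])
        (use w pos in \<open>auto simp: wiener_coeffs_def\<close>)
    then show "\<exists>f. holo_disc f \<and> f 0 = c 0 $ i $ j \<and> (\<forall>z\<in>S1. g z $ i $ j = f (inverse z))"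
      by blast
  qed
  then obtain f where f: "\<And>i j. holo_disc (f i j) \<and> f i j 0 = c 0 $ i $ j \<and> (\<forall>z\<in>S1. g z $ i $ j = f i j (inverse z))"
    by metis
  show ?thesis
    unfolding extends_outside_def holo_disc_mat_def
    by (rule exI[of _ "\<lambda>z. \<chi> i j. f i j z"]) (simp add: f vec_eq_iff)
qed

lemma LSU2_det: "LSU2 g \<Longrightarrow> z \<in> S1 \<Longrightarrow> det (g z) = 1"
  unfolding LSU2_def by blast

lemma LSU2_plus_star_extends_inside: "LSU2_plus_star g \<Longrightarrow> extends_inside g (mat 1)"
  unfolding LSU2_plus_star_def using wiener_coeffs_extends_inside by metis

lemma LSU2_plus_extends_inside: "LSU2_plus g \<Longrightarrow> \<exists>a. extends_inside g a"
  unfolding LSU2_plus_def using wiener_coeffs_extends_inside by metis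

lemma LSU2_minus_star_extends_outside: "LSU2_minus_star g \<Longrightarrow> extends_outside g (mat 1)"
  unfolding LSU2_minus_star_def using wiener_coeffs_extends_outside by metis

lemma LSU2_minus_extends_outside: "LSU2_minus g \<Longrightarrow> \<exists>a. extends_outside g a"
  unfolding LSU2_minus_def using wiener_coeffs_extends_outside by metis

lemma holo_disc_mat_mat2:
  "holo_disc a \<Longrightarrow> holo_disc b \<Longrightarrow> holo_disc c \<Longrightarrow> holo_disc d \<Longrightarrow>
   holo_disc_mat (\<lambda>z. mat2 (a z) (b z) (c z) (d z))"
  unfolding holo_disc_mat_def by (auto simp: forall_2)

lemma holo_disc_mat_mult: "holo_disc_mat A \<Longrightarrow> holo_disc_mat B \<Longrightarrow> holo_disc_mat (\<lambda>z. A z ** B z)"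
  unfolding holo_disc_mat_def matrix_mult_nth_2 by (auto intro!: holo_disc_add holo_disc_mult)

lemma holo_disc_mat_adj2: "holo_disc_mat A \<Longrightarrow> holo_disc_mat (\<lambda>z. adj2 (A z))"
  unfolding adj2_def by (intro holo_disc_mat_mat2 holo_disc_uminus) (simp_all add: holo_disc_mat_def)

lemma extends_inside_cong:
  "extends_inside A a \<Longrightarrow> (\<And>z. z \<in> S1 \<Longrightarrow> A z = B z) \<Longrightarrow> extends_inside B a"
  unfolding extends_inside_def by auto

lemma extends_outside_cong:
  "extends_outside A a \<Longrightarrow> (\<And>z. z \<in> S1 \<Longrightarrow> A z = B z) \<Longrightarrow> extends_outside B a"
  unfolding extends_outside_def by auto

lemma extends_inside_const: "extends_inside (\<lambda>z. C) C"
  unfolding extends_inside_def holo_disc_mat_def by (auto intro!: exI[of _ "\<lambda>z. C"] holo_disc_const)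

lemma extends_outside_const: "extends_outside (\<lambda>z. C) C"
  unfolding extends_outside_def holo_disc_mat_def by (auto intro!: exI[of _ "\<lambda>z. C"] holo_disc_const)

lemma extends_inside_mult:
  assumes "extends_inside A a" "extends_inside B b"
  shows "extends_inside (\<lambda>z. A z ** B z) (a ** b)"
proof -
  obtain A' B' where "holo_disc_mat A'" "A' 0 = a" "\<forall>z\<in>S1. A z = A' z"
    "holo_disc_mat B'" "B' 0 = b" "\<forall>z\<in>S1. B z = B' z"
    using assms unfolding extends_inside_def by blast
  then show ?thesis
    unfolding extends_inside_def by (intro exI[of _ "\<lambda>z. A' z ** B' z"]) (auto intro: holo_disc_mat_mult)
qed

lemma extends_outside_mult:
  assumes "extends_outside A a" "extends_outside B b"
  shows "extends_outside (\<lambda>z. A z ** B z) (a ** b)"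
proof -
  obtain A' B' where "holo_disc_mat A'" "A' 0 = a" "\<forall>z\<in>S1. A z = A' (inverse z)"
    "holo_disc_mat B'" "B' 0 = b" "\<forall>z\<in>S1. B z = B' (inverse z)"
    using assms unfolding extends_outside_def by blast
  then show ?thesis
    unfolding extends_outside_def by (intro exI[of _ "\<lambda>z. A' z ** B' z"]) (auto intro: holo_disc_mat_mult)
qed

lemma extends_inside_adj2:
  assumes "extends_inside A a"
  shows "extends_inside (\<lambda>z. adj2 (A z)) (adj2 a)"
proof -
  obtain A' where "holo_disc_mat A'" "A' 0 = a" "\<forall>z\<in>S1. A z = A' z"
    using assms unfolding extends_inside_def by blast
  then show ?thesis
    unfolding extends_inside_def by (intro exI[of _ "\<lambda>z. adj2 (A' z)"]) (auto intro: holo_disc_mat_adj2)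
qed

lemma extends_outside_adj2:
  assumes "extends_outside A a"
  shows "extends_outside (\<lambda>z. adj2 (A z)) (adj2 a)"
proof -
  obtain A' where "holo_disc_mat A'" "A' 0 = a" "\<forall>z\<in>S1. A z = A' (inverse z)"
    using assms unfolding extends_outside_def by blast
  then show ?thesis
    unfolding extends_outside_def by (intro exI[of _ "\<lambda>z. adj2 (A' z)"]) (auto intro: holo_disc_mat_adj2)
qed

lemma extends_inside_outside_const:
  assumes "extends_inside A a" "extends_outside B b" "\<And>z. z \<in> S1 \<Longrightarrow> A z = B z"
  shows "a = b" "\<And>z. z \<in> S1 \<Longrightarrow> A z = a"
proof -
  obtain A' where A': "holo_disc_mat A'" "A' 0 = a" "\<forall>z\<in>S1. A z = A' z"
    using assms(1) extends_inside_def by auto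
  obtain B' where B': "holo_disc_mat B'" "B' 0 = b" "\<forall>z\<in>S1. B z = B' (inverse z)"
    using assms(2) extends_outside_def by auto
  have "A' z = B' (inverse z)" if "z \<in> S1" for z
    using A'(3) B'(3) assms(3) that by metis
  then have glue: "A' w $ i $ j = B' 0 $ i $ j" if "norm w \<le> 1" for w i j
    using A'(1) B'(1) that
    by (intro holo_disc_inverse_glue[of "\<lambda>z. A' z $ i $ j" "\<lambda>z. B' z $ i $ j"])
      (simp_all add: holo_disc_mat_def)
  show "a = b"
    using glue[of 0] A'(2) B'(2) by (simp add: vec_eq_iff)
  show "A z = a" if "z \<in> S1" for z
    using glue[of z] glue[of 0] that A' by (simp add: vec_eq_iff S1_def)
qed

section \<open>Uniqueness of normalised Birkhoff factors\<close>

lemma birkhoff_plus_factor_unique: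
  assumes "extends_inside P (mat 1)" "extends_inside P' (mat 1)"
    and "extends_outside M a" "extends_outside M' b"
    and "\<And>z. z \<in> S1 \<Longrightarrow> det (P z) = 1" "\<And>z. z \<in> S1 \<Longrightarrow> det (M' z) = 1"
    and "\<And>z. z \<in> S1 \<Longrightarrow> P' z ** M' z = P z ** M z"
    and z: "z \<in> S1"
  shows "P' z = P z"
proof -
  have inside: "extends_inside (\<lambda>z. adj2 (P z) ** P' z) (mat 1)"
    using extends_inside_mult[OF extends_inside_adj2[OF assms(1)] assms(2)] by simp
  have outside: "extends_outside (\<lambda>z. M z ** adj2 (M' z)) (a ** adj2 b)"
    by (intro extends_outside_mult extends_outside_adj2 assms(3,4))
  have "adj2 (P z) ** P' z = M z ** adj2 (M' z)" if "z \<in> S1" for z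
    using adj2_mult_swap[OF assms(5-7)[OF that]] by simp
  then have "adj2 (P z) ** P' z = mat 1"
    using extends_inside_outside_const(2)[OF inside outside _ z] by blast
  then show ?thesis
    using adj2_mult_eq_mat_1_imp_eq assms(5) z by blast
qed

lemma birkhoff_minus_factor_unique:
  assumes "extends_outside M (mat 1)" "extends_outside M' (mat 1)"
    and "extends_inside P a" "extends_inside P' b"
    and "\<And>z. z \<in> S1 \<Longrightarrow> det (M z) = 1" "\<And>z. z \<in> S1 \<Longrightarrow> det (P' z) = 1"
    and "\<And>z. z \<in> S1 \<Longrightarrow> M' z ** P' z = M z ** P z"
    and z: "z \<in> S1"
  shows "M' z = M z"
proof -
  have outside: "extends_outside (\<lambda>z. adj2 (M z) ** M' z) (mat 1)"
    using extends_outside_mult[OF extends_outside_adj2[OF assms(1)] assms(2)] by simp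
  have inside: "extends_inside (\<lambda>z. P z ** adj2 (P' z)) (a ** adj2 b)"
    by (intro extends_inside_mult extends_inside_adj2 assms(3,4))
  have swap: "P z ** adj2 (P' z) = adj2 (M z) ** M' z" if "z \<in> S1" for z
    using adj2_mult_swap[OF assms(5-7)[OF that]] by simp
  have "adj2 (M z) ** M' z = a ** adj2 b" "a ** adj2 b = mat 1"
    using extends_inside_outside_const[OF inside outside swap] z by (simp_all flip: swap)
  then show ?thesis
    using adj2_mult_eq_mat_1_imp_eq assms(5) z by simp
qed

lemma int_shift_invariant:
  fixes f :: "int \<Rightarrow> 'a"
  assumes "\<And>k. f (k + 1) = f k"
  shows "f n = f 0"
proof (induct n rule: int_induct[where k = 0])
  case base
  show ?case ..
next
  case (step1 i)
  show ?case
    using assms[of i] step1(2) by (rule trans)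
next
  case (step2 i)
  have "f (i - 1) = f i"
    using assms[of "i - 1"] by simp
  then show ?case
    using step2(2) by (rule trans)
qed

lemma int_recursion_preserves:
  fixes Y K :: "int \<Rightarrow> loop"
  assumes R_cong: "\<And>A B. R A \<Longrightarrow> (\<And>z. z \<in> S1 \<Longrightarrow> A z = B z) \<Longrightarrow> R B"
    and R_mult: "\<And>A B. R A \<Longrightarrow> R B \<Longrightarrow> R (\<lambda>z. A z ** B z)"
    and R_adj2: "\<And>A. R A \<Longrightarrow> R (\<lambda>z. adj2 (A z))"
    and R_K: "\<And>n. R (K n)" and R_Y0: "R (Y 0)"
    and det_K: "\<And>n z. z \<in> S1 \<Longrightarrow> det (K n z) = 1"
    and Y_step: "\<And>n z. z \<in> S1 \<Longrightarrow> Y (n + 1) z = Y n z ** K n z"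
  shows "R (Y n)"
proof (induct n rule: int_induct[where k = 0])
  case base
  show ?case by (rule R_Y0)
next
  case (step1 i)
  show ?case
    by (rule R_cong[OF R_mult[OF step1(2) R_K]]) (simp add: Y_step)
next
  case (step2 i)
  have "Y (i - 1) z = Y i z ** adj2 (K (i - 1) z)" if "z \<in> S1" for z
    using Y_step[OF that, of "i - 1"] matrix_mul_adj2[OF det_K[OF that]]
    by (simp flip: matrix_mul_assoc)
  then show ?case
    by (intro R_cong[OF R_mult[OF step2(2) R_adj2[OF R_K]]]) simp
qed

lemma extends_inside_recursion:
  fixes Y K :: "int \<Rightarrow> loop"
  assumes "\<And>n. extends_inside (K n) (mat 1)" "extends_inside (Y 0) (mat 1)"
    and "\<And>n z. z \<in> S1 \<Longrightarrow> det (K n z) = 1"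
    and "\<And>n z. z \<in> S1 \<Longrightarrow> Y (n + 1) z = Y n z ** K n z"
  shows "extends_inside (Y n) (mat 1)"
proof (rule int_recursion_preserves[where R = "\<lambda>A. extends_inside A (mat 1)" and K = K and Y = Y])
  show "extends_inside (\<lambda>z. A z ** B z) (mat 1)"
    if "extends_inside A (mat 1)" "extends_inside B (mat 1)" for A B
    using extends_inside_mult[OF that] by simp
  show "extends_inside (\<lambda>z. adj2 (A z)) (mat 1)" if "extends_inside A (mat 1)" for A
    using extends_inside_adj2[OF that] by simp
  show "extends_inside B (mat 1)"
    if "extends_inside A (mat 1)" "\<And>z. z \<in> S1 \<Longrightarrow> A z = B z" for A B
    by (rule extends_inside_cong[OF that])
qed (fact assms)+

lemma extends_outside_recursion:
  fixes Y K :: "int \<Rightarrow> loop"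
  assumes "\<And>n. extends_outside (K n) (mat 1)" "extends_outside (Y 0) (mat 1)"
    and "\<And>n z. z \<in> S1 \<Longrightarrow> det (K n z) = 1"
    and "\<And>n z. z \<in> S1 \<Longrightarrow> Y (n + 1) z = Y n z ** K n z"
  shows "extends_outside (Y n) (mat 1)"
proof (rule int_recursion_preserves[where R = "\<lambda>A. extends_outside A (mat 1)" and K = K and Y = Y])
  show "extends_outside (\<lambda>z. A z ** B z) (mat 1)"
    if "extends_outside A (mat 1)" "extends_outside B (mat 1)" for A B
    using extends_outside_mult[OF that] by simp
  show "extends_outside (\<lambda>z. adj2 (A z)) (mat 1)" if "extends_outside A (mat 1)" for A
    using extends_outside_adj2[OF that] by simp
  show "extends_outside B (mat 1)"
    if "extends_outside A (mat 1)" "\<And>z. z \<in> S1 \<Longrightarrow> A z = B z" for A B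
    by (rule extends_outside_cong[OF that])
qed (fact assms)+

section \<open>The matrices \<open>U\<close>, \<open>V\<close>, \<open>\<xi>\<^sub>+\<close>, \<open>\<xi>\<^sub>-\<close>\<close>

lemma Re_Delta_plus_radicand_pos:
  assumes p: "\<bar>p / 2\<bar> < 1" and z: "norm z \<le> 1"
  shows "0 < Re (1 + (complex_of_real (p / 2))\<^sup>2 * z\<^sup>2)"
proof -
  have "norm z ^ 2 \<le> 1"
    using z by (simp add: power_le_one)
  then have "- 1 \<le> Re (z\<^sup>2)"
    using abs_Re_le_cmod[of "z\<^sup>2"] by (simp add: norm_power)
  then have "(p/2)\<^sup>2 * (- 1) \<le> (p/2)\<^sup>2 * Re (z\<^sup>2)"
    by (rule mult_left_mono) simp
  moreover have "(p/2)\<^sup>2 < 1"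
    using p by (simp only: abs_square_less_1)
  ultimately show ?thesis
    by (simp flip: of_real_power)
qed

lemma holo_disc_Delta_plus:
  assumes "\<bar>p / 2\<bar> < 1"
  shows "holo_disc (Delta_plus p)"
proof -
  have radicand: "1 + (complex_of_real (p / 2))\<^sup>2 * z\<^sup>2 \<notin> \<real>\<^sub>\<le>\<^sub>0" if "norm z \<le> 1" for z
    using Re_Delta_plus_radicand_pos[OF assms that] by (metis complex_nonpos_Reals_iff not_le)
  have "continuous_on (cball 0 1) (\<lambda>z. csqrt (1 + (complex_of_real (p / 2))\<^sup>2 * z\<^sup>2))"
  proof (rule continuous_on_compose2[OF continuous_on_csqrt])
    show "continuous_on (cball 0 1) (\<lambda>z. 1 + (complex_of_real (p / 2))\<^sup>2 * z\<^sup>2)"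
      by (intro continuous_intros)
    show "(\<lambda>z. 1 + (complex_of_real (p / 2))\<^sup>2 * z\<^sup>2) ` cball 0 1 \<subseteq> - \<real>\<^sub>\<le>\<^sub>0"
      using radicand by auto
  qed
  moreover have "(\<lambda>z. csqrt (1 + (complex_of_real (p / 2))\<^sup>2 * z\<^sup>2)) holomorphic_on ball 0 1"
    using radicand by (intro holomorphic_intros) auto
  ultimately show ?thesis
    unfolding holo_disc_def Delta_plus_def[abs_def] by simp
qed

lemma Delta_plus_nonzero:
  assumes "\<bar>p / 2\<bar> < 1" "norm z \<le> 1"
  shows "Delta_plus p z \<noteq> 0"
proof -
  have "1 + (complex_of_real (p / 2))\<^sup>2 * z\<^sup>2 \<noteq> 0"
    using Re_Delta_plus_radicand_pos[OF assms] by (metis less_irrefl zero_complex.sel(1))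
  then show ?thesis
    unfolding Delta_plus_def by simp
qed

lemma Delta_plus_0 [simp]: "Delta_plus p 0 = 1"
  by (simp add: Delta_plus_def)

lemma power2_Delta_plus: "(Delta_plus p z)\<^sup>2 = 1 + (complex_of_real (p / 2))\<^sup>2 * z\<^sup>2"
  by (simp add: Delta_plus_def)

lemma Delta_minus_eq_Delta_plus_inverse: "Delta_minus q z = Delta_plus q (inverse z)"
  by (simp add: Delta_minus_def Delta_plus_def power_inverse)

lemma holo_disc_divide_Delta_plus:
  "holo_disc f \<Longrightarrow> \<bar>p / 2\<bar> < 1 \<Longrightarrow> holo_disc (\<lambda>z. f z / Delta_plus p z)"
  by (intro holo_disc_divide holo_disc_Delta_plus Delta_plus_nonzero)

lemma xi_plus_extends_inside:
  assumes "\<bar>p / 2\<bar> < 1"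
  shows "extends_inside (xi_plus p \<alpha>) (mat 1)"
  unfolding extends_inside_def
proof (intro exI conjI)
  show "holo_disc_mat (xi_plus p \<alpha>)"
    unfolding xi_plus_def[abs_def] Let_def
    by (intro holo_disc_mat_mat2 holo_disc_divide_Delta_plus holo_disc_const holo_disc_mult
        holo_disc_id assms)
qed (auto simp: xi_plus_def mat_1_eq_mat2)

lemma xi_minus_extends_outside:
  assumes "\<bar>q / 2\<bar> < 1"
  shows "extends_outside (xi_minus q \<beta>) (mat 1)"
  unfolding extends_outside_def
proof (intro exI conjI)
  let ?W = "\<lambda>w. mat2 (1 / Delta_plus q w)
    (- \<i> / 2 * complex_of_real q * exp (\<i> * complex_of_real \<beta>) * w / Delta_plus q w)
    (- \<i> / 2 * complex_of_real q * exp (- \<i> * complex_of_real \<beta>) * w / Delta_plus q w)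
    (1 / Delta_plus q w)"
  show "holo_disc_mat ?W"
    by (intro holo_disc_mat_mat2 holo_disc_divide_Delta_plus holo_disc_const holo_disc_mult
        holo_disc_id assms)
  show "?W 0 = mat 1"
    by (simp add: mat_1_eq_mat2)
  show "\<forall>z\<in>S1. xi_minus q \<beta> z = ?W (inverse z)"
    by (simp add: xi_minus_def Delta_minus_eq_Delta_plus_inverse Let_def)
qed

lemma Umat_extends_inside:
  assumes "\<bar>p n / 2\<bar> < 1"
  shows "\<exists>a. extends_inside (Umat u p n m) a"
proof -
  have "holo_disc_mat (Umat u p n m)"
    unfolding Umat_def[abs_def] Let_def
    by (intro holo_disc_mat_mat2 holo_disc_divide_Delta_plus holo_disc_const holo_disc_mult
        holo_disc_id assms)
  then show ?thesis
    unfolding extends_inside_def by blast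
qed

lemma Vmat_eq_xi_minus: "Vmat u q n m z = xi_minus (q m) (u n (m + 1) / 2 + u n m / 2) z"
  by (simp add: Vmat_def xi_minus_def Let_def exp_cnj mat2_eq_iff ac_simps add_divide_distrib)

lemma Vmat_extends_outside:
  assumes "\<bar>q m / 2\<bar> < 1"
  shows "extends_outside (Vmat u q n m) (mat 1)"
  using xi_minus_extends_outside[OF assms] by (rule extends_outside_cong) (simp add: Vmat_eq_xi_minus)

lemma det_xi_plus:
  assumes "\<bar>p / 2\<bar> < 1" "norm z \<le> 1"
  shows "det (xi_plus p \<alpha> z) = 1"
proof -
  have D: "Delta_plus p z \<noteq> 0"
    using Delta_plus_nonzero[OF assms] .
  have e: "exp (- \<i> * complex_of_real \<alpha>) * exp (\<i> * complex_of_real \<alpha>) = 1"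
    by (simp add: exp_add[symmetric])
  have "det (xi_plus p \<alpha> z) = (1 - (\<i> / 2 * complex_of_real p)\<^sup>2 * z\<^sup>2 *
      (exp (- \<i> * complex_of_real \<alpha>) * exp (\<i> * complex_of_real \<alpha>))) / (Delta_plus p z)\<^sup>2"
    using D by (simp add: xi_plus_def Let_def det_mat2 field_simps power2_eq_square)
  also have "\<dots> = (Delta_plus p z)\<^sup>2 / (Delta_plus p z)\<^sup>2"
    unfolding e power2_Delta_plus by (simp add: power_mult_distrib power_divide)
  also have "\<dots> = 1"
    using D by simp
  finally show ?thesis .
qed

lemma det_xi_minus:
  assumes "\<bar>q / 2\<bar> < 1" "z \<in> S1"
  shows "det (xi_minus q \<beta> z) = 1"
proof -
  have "norm (inverse z) \<le> 1"
    using assms(2) by (simp add: S1_def norm_inverse)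
  then have D: "Delta_plus q (inverse z) \<noteq> 0"
    using Delta_plus_nonzero[OF assms(1)] by blast
  have e: "exp (- \<i> * complex_of_real \<beta>) * exp (\<i> * complex_of_real \<beta>) = 1"
    by (simp add: exp_add[symmetric])
  have "det (xi_minus q \<beta> z) = (1 - (\<i> / 2 * complex_of_real q)\<^sup>2 * (inverse z)\<^sup>2 *
      (exp (- \<i> * complex_of_real \<beta>) * exp (\<i> * complex_of_real \<beta>))) / (Delta_plus q (inverse z))\<^sup>2"
    using D by (simp add: xi_minus_def Let_def det_mat2 Delta_minus_eq_Delta_plus_inverse
        field_simps power2_eq_square)
  also have "\<dots> = (Delta_plus q (inverse z))\<^sup>2 / (Delta_plus q (inverse z))\<^sup>2"
    unfolding e power2_Delta_plus by (simp add: power_mult_distrib power_divide)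
  also have "\<dots> = 1"
    using D by simp
  finally show ?thesis .
qed

lemma Umat_eq_diag_phase_xi_plus:
  "Umat u p n m z =
   diag_phase (a - u n m) ** xi_plus (p n) (u (n + 1) m / 2 + u n m / 2 - a) z **
   diag_phase (u (n + 1) m - a)"
proof -
  define A where "A = a - u n m"
  define B where "B = u (n + 1) m - a"
  define \<alpha> where "\<alpha> = u (n + 1) m / 2 + u n m / 2 - a"
  define e where "e = exp (- \<i> * complex_of_real ((u (n + 1) m - u n m) / 2))"
  define D where "D = Delta_plus (p n) z"
  define c where "c = \<i> / 2 * complex_of_real (p n) * z"
  have diag1: "exp (- \<i> * complex_of_real (A/2)) * exp (- \<i> * complex_of_real (B/2)) = e"
    unfolding e_def A_def B_def exp_add[symmetric]
    by (rule arg_cong[where f = exp]) (simp add: algebra_simps diff_divide_distrib)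
  have diag2: "exp (\<i> * complex_of_real (A/2)) * exp (\<i> * complex_of_real (B/2)) = cnj e"
    unfolding e_def A_def B_def exp_cnj exp_add[symmetric]
    by (rule arg_cong[where f = exp]) (simp add: algebra_simps diff_divide_distrib)
  have off1: "exp (- \<i> * complex_of_real (A/2)) * exp (- \<i> * complex_of_real \<alpha>) *
      exp (\<i> * complex_of_real (B/2)) = 1"
    unfolding \<alpha>_def A_def B_def exp_add[symmetric]
    by (subst exp_zero[symmetric], rule arg_cong[where f = exp])
      (simp add: algebra_simps diff_divide_distrib)
  have off2: "exp (\<i> * complex_of_real (A/2)) * exp (\<i> * complex_of_real \<alpha>) *
      exp (- \<i> * complex_of_real (B/2)) = 1"
    unfolding \<alpha>_def A_def B_def exp_add[symmetric]
    by (subst exp_zero[symmetric], rule arg_cong[where f = exp])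
      (simp add: algebra_simps diff_divide_distrib)
  have "Umat u p n m z = mat2 (e/D) (c/D) (c/D) (cnj e/D)"
    by (simp add: Umat_def Let_def e_def c_def D_def)
  moreover have "diag_phase A ** xi_plus (p n) \<alpha> z ** diag_phase B = mat2
     (exp (- \<i> * complex_of_real (A/2)) * exp (- \<i> * complex_of_real (B/2)) / D)
     (exp (- \<i> * complex_of_real (A/2)) * exp (- \<i> * complex_of_real \<alpha>) * exp (\<i> * complex_of_real (B/2)) * c / D)
     (exp (\<i> * complex_of_real (A/2)) * exp (\<i> * complex_of_real \<alpha>) * exp (- \<i> * complex_of_real (B/2)) * c / D)
     (exp (\<i> * complex_of_real (A/2)) * exp (\<i> * complex_of_real (B/2)) / D)"
    by (simp add: diag_phase_def xi_plus_def Let_def mat2_mult mat2_eq_iff D_def c_def)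
  ultimately show ?thesis
    unfolding A_def[symmetric] B_def[symmetric] \<alpha>_def[symmetric] diag1 diag2 off1 off2
    by (simp only: mult_1_left)
qed

section \<open>Birkhoff factors of a discrete extended frame\<close>

locale birkhoff_split_frame =
  fixes F Fp Fm Gm Gp :: "int \<Rightarrow> int \<Rightarrow> loop"
    and u :: "int \<Rightarrow> int \<Rightarrow> real" and p q :: "int \<Rightarrow> real"
  assumes p_bound: "\<And>n. \<bar>p n / 2\<bar> < 1"
    and q_bound: "\<And>m. \<bar>q m / 2\<bar> < 1"
    and frame: "discrete_extended_frame F u p q"
    and Fp: "\<And>n m. LSU2_plus_star (Fp n m)"
    and Fm: "\<And>n m. LSU2_minus (Fm n m)"
    and Gm: "\<And>n m. LSU2_minus_star (Gm n m)"
    and Gp: "\<And>n m. LSU2_plus (Gp n m)"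
    and F_split: "\<And>n m z. z \<in> S1 \<Longrightarrow> F n m z = Fp n m z ** Fm n m z"
    and G_split: "\<And>n m z. z \<in> S1 \<Longrightarrow> F n m z = Gm n m z ** Gp n m z"
begin

lemma F_0_0: "z \<in> S1 \<Longrightarrow> F 0 0 z = mat 1"
  and F_step_n: "z \<in> S1 \<Longrightarrow> F (n + 1) m z = F n m z ** Umat u p n m z"
  and F_step_m: "z \<in> S1 \<Longrightarrow> F n (m + 1) z = F n m z ** Vmat u q n m z"
  using frame unfolding discrete_extended_frame_def by auto

lemma det_F: "z \<in> S1 \<Longrightarrow> det (F n m z) = 1"
  and det_Fp: "z \<in> S1 \<Longrightarrow> det (Fp n m z) = 1"
  and det_Fm: "z \<in> S1 \<Longrightarrow> det (Fm n m z) = 1"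
  and det_Gm: "z \<in> S1 \<Longrightarrow> det (Gm n m z) = 1"
  and det_Gp: "z \<in> S1 \<Longrightarrow> det (Gp n m z) = 1"
  using frame Fp Fm Gm Gp
  by (auto simp: discrete_extended_frame_def LSU2_plus_star_def LSU2_minus_def
      LSU2_minus_star_def LSU2_plus_def intro: LSU2_det)

lemma Fp_step_m:
  assumes z: "z \<in> S1"
  shows "Fp n (m + 1) z = Fp n m z"
proof -
  obtain b b' where b: "extends_outside (Fm n m) b" and b': "extends_outside (Fm n (m + 1)) b'"
    using Fm LSU2_minus_extends_outside by blast
  have "Fp n (m + 1) z ** Fm n (m + 1) z = Fp n m z ** (Fm n m z ** Vmat u q n m z)"
    if "z \<in> S1" for z
    using that by (simp add: matrix_mul_assoc F_step_m flip: F_split)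
  then show ?thesis
    using birkhoff_plus_factor_unique[OF LSU2_plus_star_extends_inside[OF Fp]
        LSU2_plus_star_extends_inside[OF Fp]
        extends_outside_mult[OF b Vmat_extends_outside[where q = q, OF q_bound]] b' det_Fp det_Fm] z
    by blast
qed

lemma Gm_step_n:
  assumes z: "z \<in> S1"
  shows "Gm (n + 1) m z = Gm n m z"
proof -
  obtain a a' where a: "extends_inside (Gp n m) a" and a': "extends_inside (Gp (n + 1) m) a'"
    using Gp LSU2_plus_extends_inside by blast
  obtain c where c: "extends_inside (Umat u p n m) c"
    using Umat_extends_inside p_bound by blast
  have "Gm (n + 1) m z ** Gp (n + 1) m z = Gm n m z ** (Gp n m z ** Umat u p n m z)"
    if "z \<in> S1" for z
    using that by (simp add: matrix_mul_assoc F_step_n flip: G_split)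
  then show ?thesis
    using birkhoff_minus_factor_unique[OF LSU2_minus_star_extends_outside[OF Gm]
        LSU2_minus_star_extends_outside[OF Gm] extends_inside_mult[OF a c] a'
        det_Gm det_Gp] z by blast
qed

lemma F_axis_n_recursion:
  assumes "z \<in> S1"
  shows "F (n + 1) 0 z ** diag_phase (u 0 0 - u (n + 1) 0) =
    F n 0 z ** diag_phase (u 0 0 - u n 0) ** xi_plus (p n) (u (n + 1) 0 / 2 + u n 0 / 2 - u 0 0) z"
proof -
  have "F (n + 1) 0 z ** diag_phase (u 0 0 - u (n + 1) 0) =
    F n 0 z ** diag_phase (u 0 0 - u n 0) ** xi_plus (p n) (u (n + 1) 0 / 2 + u n 0 / 2 - u 0 0) z **
    (diag_phase (u (n + 1) 0 - u 0 0) ** diag_phase (u 0 0 - u (n + 1) 0))"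
    using assms by (simp add: F_step_n Umat_eq_diag_phase_xi_plus[where a = "u 0 0"] matrix_mul_assoc)
  then show ?thesis
    by (simp add: diag_phase_add)
qed

lemma Fp_axis_n:
  assumes z: "z \<in> S1"
  shows "Fp n 0 z = F n 0 z ** diag_phase (u 0 0 - u n 0)"
proof -
  have Y: "extends_inside (\<lambda>z. F n 0 z ** diag_phase (u 0 0 - u n 0)) (mat 1)"
  proof (rule extends_inside_recursion[where Y = "\<lambda>n z. F n 0 z ** diag_phase (u 0 0 - u n 0)"
        and K = "\<lambda>n. xi_plus (p n) (u (n + 1) 0 / 2 + u n 0 / 2 - u 0 0)"])
    show "extends_inside (\<lambda>z. F 0 0 z ** diag_phase (u 0 0 - u 0 0)) (mat 1)"
      by (rule extends_inside_cong[OF extends_inside_const]) (simp add: F_0_0)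
  qed (simp_all add: xi_plus_extends_inside[OF p_bound] det_xi_plus[OF p_bound] S1_def
      F_axis_n_recursion)
  obtain b where b: "extends_outside (Fm n 0) b"
    using Fm LSU2_minus_extends_outside by blast
  have "Fp n 0 z ** Fm n 0 z = F n 0 z ** diag_phase (u 0 0 - u n 0) ** diag_phase (u n 0 - u 0 0)"
    if "z \<in> S1" for z
    using that by (simp add: F_split diag_phase_add flip: matrix_mul_assoc)
  then show ?thesis
    using birkhoff_plus_factor_unique[OF Y LSU2_plus_star_extends_inside[OF Fp] extends_outside_const b]
      det_F det_Fm z by (simp add: det_mul det_diag_phase)
qed

lemma F_axis_m_extends_outside: "extends_outside (F 0 m) (mat 1)"
proof (rule extends_outside_recursion[where K = "Vmat u q 0"])
  show "extends_outside (F 0 0) (mat 1)"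
    by (rule extends_outside_cong[OF extends_outside_const]) (simp add: F_0_0)
qed (simp_all add: Vmat_extends_outside[where q = q, OF q_bound] Vmat_eq_xi_minus det_xi_minus[OF q_bound] F_step_m)

lemma Gm_axis_m:
  assumes z: "z \<in> S1"
  shows "Gm 0 m z = F 0 m z"
proof -
  obtain a where a: "extends_inside (Gp 0 m) a"
    using Gp LSU2_plus_extends_inside by blast
  have "Gm 0 m z ** Gp 0 m z = F 0 m z ** mat 1" if "z \<in> S1" for z
    using that by (simp add: G_split)
  then show ?thesis
    using birkhoff_minus_factor_unique[OF F_axis_m_extends_outside
        LSU2_minus_star_extends_outside[OF Gm] extends_inside_const a det_F det_Gp] z by blast
qed

lemma Fp_indep_m: "z \<in> S1 \<Longrightarrow> Fp n m z = Fp n 0 z"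
  using int_shift_invariant[of "\<lambda>m. Fp n m z"] Fp_step_m by blast

lemma Gm_indep_n: "z \<in> S1 \<Longrightarrow> Gm n m z = Gm 0 m z"
  using int_shift_invariant[of "\<lambda>n. Gm n m z"] Gm_step_n by blast

lemma Fp_quotient:
  assumes z: "z \<in> S1"
  shows "matrix_inv (Fp n m z) ** Fp (n + 1) m z =
    xi_plus (p n) (u (n + 1) 0 / 2 + u n 0 / 2 - u 0 0) z"
proof -
  define Y where "Y = F n 0 z ** diag_phase (u 0 0 - u n 0)"
  have det: "det Y = 1"
    using z by (simp add: Y_def det_mul det_F det_diag_phase)
  have "Fp n m z = Y" "Fp (n + 1) m z = Y ** xi_plus (p n) (u (n + 1) 0 / 2 + u n 0 / 2 - u 0 0) z"
    using z by (simp_all add: Fp_indep_m[of z _ m] Fp_axis_n F_axis_n_recursion Y_def)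
  then show ?thesis
    by (simp add: matrix_inv_eq_adj2[OF det] matrix_mul_assoc adj2_matrix_mul[OF det])
qed

lemma Gm_quotient:
  assumes z: "z \<in> S1"
  shows "matrix_inv (Gm n m z) ** Gm n (m + 1) z = xi_minus (q m) (u 0 (m + 1) / 2 + u 0 m / 2) z"
proof -
  have "Gm n m z = F 0 m z" "Gm n (m + 1) z = F 0 m z ** Vmat u q 0 m z"
    using z by (simp_all add: Gm_indep_n[of z n] Gm_axis_m F_step_m)
  then show ?thesis
    using det_F[OF z, of 0 m]
    by (simp add: matrix_inv_eq_adj2 matrix_mul_assoc adj2_matrix_mul Vmat_eq_xi_minus)
qed

end

theorem theorem2p1:
  fixes F Fp Fm Gm Gp :: "int \<Rightarrow> int \<Rightarrow> loop"
    and u :: "int \<Rightarrow> int \<Rightarrow> real" and p q :: "int \<Rightarrow> real"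
  assumes hp: "\<And>n. 0 < \<bar>p n / 2\<bar> \<and> \<bar>p n / 2\<bar> < 1"
    and hq: "\<And>m. 0 < \<bar>q m / 2\<bar> \<and> \<bar>q m / 2\<bar> < 1"
    and hF: "discrete_extended_frame F u p q"
    and hFp: "\<And>n m. LSU2_plus_star (Fp n m)"
    and hFm: "\<And>n m. LSU2_minus (Fm n m)"
    and hGm: "\<And>n m. LSU2_minus_star (Gm n m)"
    and hGp: "\<And>n m. LSU2_plus (Gp n m)"
    and hFdec: "\<And>n m z. z \<in> S1 \<Longrightarrow> F n m z = Fp n m z ** Fm n m z"
    and hGdec: "\<And>n m z. z \<in> S1 \<Longrightarrow> F n m z = Gm n m z ** Gp n m z"
  shows "(\<forall>n m m'. \<forall>z\<in>S1. Fp n m z = Fp n m' z) \<and>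
         (\<forall>n n' m. \<forall>z\<in>S1. Gm n m z = Gm n' m z) \<and>
         (\<forall>n m. \<forall>z\<in>S1. matrix_inv (Fp n m z) ** Fp (n + 1) m z =
              xi_plus (p n) (u (n + 1) 0 / 2 + u n 0 / 2 - u 0 0) z) \<and>
         (\<forall>n m. \<forall>z\<in>S1. matrix_inv (Gm n m z) ** Gm n (m + 1) z =
              xi_minus (q m) (u 0 (m + 1) / 2 + u 0 m / 2) z)"
proof -
  interpret birkhoff_split_frame F Fp Fm Gm Gp u p q
    using assms by unfold_locales auto
  have "Fp n m z = Fp n m' z" "Gm n m z = Gm n' m z" if "z \<in> S1" for n n' m m' z
    using Fp_indep_m[OF that] Gm_indep_n[OF that] by metis+
  then show ?thesis
    using Fp_quotient Gm_quotient by blast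
qed

end
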